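(* Let $r,n\in\mathbb{Z}_{\geq1}$ and $j\in\mathbb{Z}_{\geq0}$. If $j\leq r$, then \[ \left|\omega_{n,r}(j)-\frac{e^{-1/n}}{j!\,n^j}\right|<\frac{1+2^{r-j}}{j!\,n^j\,(r-j)!}. \] If $j>r$, then $\omega_{n,r}(j)=0$.
   Context: $C_n\wr S_r=C_n^r\rtimes S_r$ (with $S_r$ permuting coordinates) acts on $B(n,r)=C_n\times\{1,\dots,r\}$ by $((\zeta_1,\dots,\zeta_r),\pi)\cdot(\zeta,i)=(\zeta_i\zeta,\pi(i))$. For $\sigma\in C_n\wr S_r$, $\mathrm{Fix}(\sigma)$ is its set of fixed points in $B(n,r)$ (its size is divisible by $n$). The distribution $\omega_{n,r}:\mathbb{Z}_{\geq0}\to\mathbb{R}_{\geq0}$ is $\omega_{n,r}(j)=|\{\sigma\in C_n\wr S_r: |\mathrm{Fix}(\sigma)|=jn\}|/|C_n\wr S_r|$. *)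

theory Defs
  imports Complex_Main "HOL-Library.FuncSet" "HOL-Combinatorics.Permutations"
begin

text \<open>The cyclic group C_n is modelled additively as {0..<n} with addition mod n.\<close>

definition wreath :: "nat \<Rightarrow> nat \<Rightarrow> ((nat \<Rightarrow> nat) \<times> (nat \<Rightarrow> nat)) set" where
  "wreath n r = {(z, p). z \<in> {1..r} \<rightarrow>\<^sub>E {0..<n} \<and> p permutes {1..r}}"

definition Bset :: "nat \<Rightarrow> nat \<Rightarrow> (nat \<times> nat) set" where
  "Bset n r = {0..<n} \<times> {1..r}"

definition wr_act :: "nat \<Rightarrow> (nat \<Rightarrow> nat) \<times> (nat \<Rightarrow> nat) \<Rightarrow> nat \<times> nat \<Rightarrow> nat \<times> nat" where
  "wr_act n \<sigma> x = ((fst \<sigma> (snd x) + fst x) mod n, snd \<sigma> (snd x))"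

definition Fix :: "nat \<Rightarrow> nat \<Rightarrow> (nat \<Rightarrow> nat) \<times> (nat \<Rightarrow> nat) \<Rightarrow> (nat \<times> nat) set" where
  "Fix n r \<sigma> = {x \<in> Bset n r. wr_act n \<sigma> x = x}"

definition omega :: "nat \<Rightarrow> nat \<Rightarrow> nat \<Rightarrow> real" where
  "omega n r j = real (card {\<sigma> \<in> wreath n r. card (Fix n r \<sigma>) = j * n}) / real (card (wreath n r))"

end

theory Submission imports Defs begin

text \<open>An element \<open>(z, p)\<close> fixes the point \<open>(\<zeta>, i)\<close> iff \<open>p i = i\<close> and \<open>z i = 0\<close>, so \<open>|Fix \<sigma>|\<close>
is \<open>n\<close> times the number of such fixed letters \<open>i\<close>. The elements whose fixed letters include a
given \<open>T \<subseteq> {1..r}\<close> are the pairs with \<open>z\<close> vanishing on \<open>T\<close> and \<open>p\<close> permuting \<open>{1..r} - T\<close>;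
there are \<open>n^(r-|T|) (r-|T|)!\<close> of them. Inclusion-exclusion then gives
\<open>\<omega>(j) = (\<Sum>l\<le>r-j. (-1/n)^l / l!) / (j! n^j)\<close>, a truncated series for \<open>exp (-1/n)\<close> whose Lagrange
remainder is at most \<open>1/(r-j+1)!\<close>; for \<open>j > r\<close> every term of the sum vanishes.\<close>

definition fixed_letters :: "nat \<Rightarrow> (nat \<Rightarrow> nat) \<times> (nat \<Rightarrow> nat) \<Rightarrow> nat set" where
  "fixed_letters r \<sigma> = {i \<in> {1..r}. snd \<sigma> i = i \<and> fst \<sigma> i = 0}"

lemma fixed_letters_subset: "fixed_letters r \<sigma> \<subseteq> {1..r}"
  by (auto simp: fixed_letters_def)

lemma add_mod_eq_self_iff:
  fixes a x n :: nat
  assumes "x < n" "a < n"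
  shows "(x + a) mod n = a \<longleftrightarrow> x = 0"
  using assms by (auto simp: mod_if)

lemma Fix_eq_times_fixed_letters:
  assumes "\<sigma> \<in> wreath n r"
  shows "Fix n r \<sigma> = {0..<n} \<times> fixed_letters r \<sigma>"
proof -
  have "fst \<sigma> i < n" if "i \<in> {1..r}" for i
    using assms that by (auto simp: wreath_def)
  then show ?thesis
    by (auto simp: Fix_def fixed_letters_def Bset_def wr_act_def prod_eq_iff add_mod_eq_self_iff)
qed

lemma card_Fix:
  assumes "\<sigma> \<in> wreath n r"
  shows "card (Fix n r \<sigma>) = n * card (fixed_letters r \<sigma>)"
  by (simp add: Fix_eq_times_fixed_letters[OF assms] card_cartesian_product)

lemma wreath_eq_PiE_times_permutations:
  "wreath n r = ({1..r} \<rightarrow>\<^sub>E {0..<n}) \<times> {p. p permutes {1..r}}"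
  by (auto simp: wreath_def)

lemma finite_wreath: "finite (wreath n r)"
  by (simp add: wreath_eq_PiE_times_permutations finite_PiE finite_permutations)

lemma wreath_fixing_eq:
  assumes "n \<ge> 1" "T \<subseteq> {1..r}"
  shows "{\<sigma> \<in> wreath n r. T \<subseteq> fixed_letters r \<sigma>}
    = (\<Pi>\<^sub>E i\<in>{1..r}. if i \<in> T then {0} else {0..<n}) \<times> {p. p permutes ({1..r} - T)}"
    (is "_ = ?Z \<times> _")
proof -
  have "(z, p) \<in> wreath n r \<and> T \<subseteq> fixed_letters r (z, p) \<longleftrightarrow> z \<in> ?Z \<and> p permutes ({1..r} - T)"
    for z p
  proof
    assume "(z, p) \<in> wreath n r \<and> T \<subseteq> fixed_letters r (z, p)"
    then have z: "z \<in> {1..r} \<rightarrow>\<^sub>E {0..<n}" and p: "p permutes {1..r}"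
      and fixed: "\<And>i. i \<in> T \<Longrightarrow> p i = i \<and> z i = 0"
      by (auto simp: wreath_def fixed_letters_def)
    have "p permutes ({1..r} - T)"
      using p by (rule permutes_superset) (simp add: fixed)
    moreover have "z \<in> ?Z"
      using z by (simp add: PiE_iff fixed)
    ultimately show "z \<in> ?Z \<and> p permutes ({1..r} - T)"
      by blast
  next
    assume "z \<in> ?Z \<and> p permutes ({1..r} - T)"
    then have z: "z \<in> ?Z" and p: "p permutes ({1..r} - T)"
      by auto
    have "p permutes {1..r}"
      using p by (rule permutes_subset) auto
    moreover have "z \<in> {1..r} \<rightarrow>\<^sub>E {0..<n}"
      using z assms(1) by (force simp: PiE_iff split: if_splits)
    moreover have "T \<subseteq> fixed_letters r (z, p)"
      using z p assms(2) by (force simp: fixed_letters_def PiE_iff permutes_not_in)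
    ultimately show "(z, p) \<in> wreath n r \<and> T \<subseteq> fixed_letters r (z, p)"
      by (simp add: wreath_def)
  qed
  then show ?thesis
    by auto
qed

lemma card_wreath_fixing:
  assumes "n \<ge> 1" "T \<subseteq> {1..r}"
  shows "card {\<sigma> \<in> wreath n r. T \<subseteq> fixed_letters r \<sigma>} = n ^ (r - card T) * fact (r - card T)"
proof -
  have finite_T: "finite T"
    using assms(2) finite_subset by blast
  have card_complement: "card ({1..r} - T) = r - card T"
    using assms(2) by (simp add: card_Diff_subset finite_T)
  have "card (\<Pi>\<^sub>E i\<in>{1..r}. if i \<in> T then {0} else {0..<n}) = (\<Prod>i\<in>{1..r}. if i \<in> T then 1 else n)"
    by (simp add: card_PiE if_distrib cong: if_cong)
  also have "\<dots> = n ^ card ({1..r} - T)"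
    by (simp add: prod.If_cases Diff_eq)
  finally show ?thesis
    using card_complement
    by (simp add: wreath_fixing_eq[OF assms] card_cartesian_product card_permutations)
qed

lemma card_wreath:
  assumes "n \<ge> 1"
  shows "card (wreath n r) = n ^ r * fact r"
  using card_wreath_fixing[OF assms, of "{}" r] by simp

lemma sum_atMost_shift_vanishing:
  fixes f :: "nat \<Rightarrow> 'a::comm_monoid_add"
  assumes "\<And>k. k < j \<Longrightarrow> f k = 0" "j \<le> s"
  shows "(\<Sum>k\<le>s. f k) = (\<Sum>l\<le>s - j. f (l + j))"
proof -
  have "(\<Sum>k\<le>s. f k) = (\<Sum>k\<in>{j..s}. f k)"
    using assms(1) by (intro sum.mono_neutral_right) auto
  also have "\<dots> = (\<Sum>l\<le>s - j. f (l + j))"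
    using assms(2) sum.shift_bounds_cl_nat_ivl[of f 0 j "s - j"] by (simp add: atLeast0AtMost)
  finally show ?thesis .
qed

lemma sum_choose_mult_alternating_choose:
  "(\<Sum>k\<le>s. of_nat (s choose k) * ((-1) ^ (k - j) * of_nat (k choose j)))
    = (if s = j then 1 else (0 :: 'a::comm_ring_1))"
proof (cases "j \<le> s")
  case True
  have "(\<Sum>k\<le>s. of_nat (s choose k) * ((-1) ^ (k - j) * of_nat (k choose j)))
      = (\<Sum>l\<le>s - j. of_nat (s choose (l + j)) * ((-1) ^ l * of_nat ((l + j) choose j)) :: 'a)"
    using True by (subst sum_atMost_shift_vanishing[of j]) (auto simp: binomial_eq_0)
  also have "\<dots> = of_nat (s choose j) * (\<Sum>l\<le>s - j. (-1) ^ l * of_nat ((s - j) choose l))"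
    unfolding sum_distrib_left
  proof (intro sum.cong refl)
    fix l assume "l \<in> {..s - j}"
    then have "(s choose (l + j)) * ((l + j) choose j) = (s choose j) * ((s - j) choose l)"
      using choose_mult[of j "l + j" s] True by simp
    then show "of_nat (s choose (l + j)) * ((-1) ^ l * of_nat ((l + j) choose j))
        = of_nat (s choose j) * ((-1) ^ l * of_nat ((s - j) choose l) :: 'a)"
      by (metis (mono_tags, lifting) mult.left_commute of_nat_mult)
  qed
  also have "\<dots> = (if s = j then 1 else 0)"
    using True choose_alternating_sum[of "s - j", where 'a = 'a] by auto
  finally show ?thesis .
qed (auto simp: binomial_eq_0 intro!: sum.neutral)

lemma sum_Pow_card:
  assumes "finite A"
  shows "(\<Sum>T\<in>Pow A. g (card T)) = (\<Sum>k\<le>card A. of_nat (card A choose k) * g k)"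
proof -
  have "(\<Sum>T\<in>Pow A. g (card T)) = (\<Sum>k\<le>card A. \<Sum>T\<in>{T \<in> Pow A. card T = k}. g (card T))"
    using assms by (intro sum.group[symmetric]) (auto intro: card_mono)
  also have "\<dots> = (\<Sum>k\<le>card A. of_nat (card A choose k) * g k)"
    using n_subsets[OF assms] by (simp add: Pow_def)
  finally show ?thesis .
qed

lemma sum_Pow_alternating_choose:
  assumes "finite B"
  shows "(\<Sum>T\<in>Pow B. (-1) ^ (card T - j) * of_nat (card T choose j))
    = (if card B = j then 1 else (0 :: 'a::comm_ring_1))"
  unfolding sum_Pow_card[OF assms, of "\<lambda>k. (-1) ^ (k - j) * of_nat (k choose j)"]
  by (rule sum_choose_mult_alternating_choose)

lemma card_exactly_inclusion_exclusion:
  fixes S :: "'w \<Rightarrow> 'b set"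
  assumes "finite W" "finite A" "\<And>\<sigma>. \<sigma> \<in> W \<Longrightarrow> S \<sigma> \<subseteq> A"
  shows "of_nat (card {\<sigma> \<in> W. card (S \<sigma>) = j})
    = (\<Sum>T\<in>Pow A. (-1) ^ (card T - j) * of_nat (card T choose j) * of_nat (card {\<sigma> \<in> W. T \<subseteq> S \<sigma>})
        :: 'a::comm_ring_1)"
proof -
  define c :: "'b set \<Rightarrow> 'a" where "c T = (-1) ^ (card T - j) * of_nat (card T choose j)" for T
  have "of_nat (card {\<sigma> \<in> W. card (S \<sigma>) = j}) = (\<Sum>\<sigma>\<in>W. if card (S \<sigma>) = j then 1 else (0 :: 'a))"
    using assms(1) by (simp add: sum.If_cases Int_def)
  also have "\<dots> = (\<Sum>\<sigma>\<in>W. \<Sum>T\<in>Pow (S \<sigma>). c T)"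
  proof (intro sum.cong refl)
    fix \<sigma> assume "\<sigma> \<in> W"
    then have "finite (S \<sigma>)"
      using assms(2,3) finite_subset by blast
    then show "(if card (S \<sigma>) = j then 1 else 0) = (\<Sum>T\<in>Pow (S \<sigma>). c T)"
      by (simp add: c_def sum_Pow_alternating_choose)
  qed
  also have "\<dots> = (\<Sum>\<sigma>\<in>W. \<Sum>T\<in>Pow A. if T \<subseteq> S \<sigma> then c T else 0)"
  proof (rule sum.cong[OF refl])
    fix \<sigma> assume "\<sigma> \<in> W"
    then have Pow_eq: "Pow (S \<sigma>) = {T \<in> Pow A. T \<subseteq> S \<sigma>}"
      using assms(3) by auto
    show "(\<Sum>T\<in>Pow (S \<sigma>). c T) = (\<Sum>T\<in>Pow A. if T \<subseteq> S \<sigma> then c T else 0)"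
      unfolding Pow_eq using assms(2) by (intro sum.inter_filter) simp
  qed
  also have "\<dots> = (\<Sum>T\<in>Pow A. \<Sum>\<sigma>\<in>W. if T \<subseteq> S \<sigma> then c T else 0)"
    by (rule sum.swap)
  also have "\<dots> = (\<Sum>T\<in>Pow A. c T * of_nat (card {\<sigma> \<in> W. T \<subseteq> S \<sigma>}))"
    using assms(1) by (simp add: sum.If_cases Int_def mult.commute)
  finally show ?thesis
    by (simp add: c_def)
qed

lemma card_wreath_card_fixed_letters:
  assumes "n \<ge> 1"
  shows "real (card {\<sigma> \<in> wreath n r. card (fixed_letters r \<sigma>) = j})
    = (\<Sum>k\<le>r. real (r choose k) * ((-1) ^ (k - j) * real (k choose j) * real (n ^ (r - k) * fact (r - k))))"
proof -
  have "real (card {\<sigma> \<in> wreath n r. card (fixed_letters r \<sigma>) = j})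
      = (\<Sum>T\<in>Pow {1..r}. (-1) ^ (card T - j) * real (card T choose j) * real (n ^ (r - card T) * fact (r - card T)))"
    using card_exactly_inclusion_exclusion[where W = "wreath n r" and A = "{1..r}" and S = "fixed_letters r"
        and 'a = real, OF finite_wreath finite_atLeastAtMost fixed_letters_subset]
    by (simp add: card_wreath_fixing[OF assms] del: of_nat_mult)
  also have "\<dots> = (\<Sum>k\<le>r. real (r choose k) * ((-1) ^ (k - j) * real (k choose j) * real (n ^ (r - k) * fact (r - k))))"
    by (subst sum_Pow_card) simp_all
  finally show ?thesis .
qed

lemma omega_eq_sum:
  assumes "n \<ge> 1"
  shows "omega n r j = (\<Sum>k\<le>r. (-1) ^ (k - j) * real (k choose j) / (fact k * real n ^ k))"
proof -
  define a where "a k = (-1) ^ (k - j) * real (k choose j)" for k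
  have "{\<sigma> \<in> wreath n r. card (Fix n r \<sigma>) = j * n} = {\<sigma> \<in> wreath n r. card (fixed_letters r \<sigma>) = j}"
    using assms by (auto simp: card_Fix)
  then have "omega n r j
      = (\<Sum>k\<le>r. real (r choose k) * (a k * real (n ^ (r - k) * fact (r - k)))) / real (n ^ r * fact r)"
    by (simp add: omega_def card_wreath_card_fixed_letters[OF assms] card_wreath[OF assms] a_def)
  also have "\<dots> = (\<Sum>k\<le>r. a k * (real (r choose k) * real n ^ (r - k) * fact (r - k) / (real n ^ r * fact r)))"
    unfolding sum_divide_distrib by (simp add: ac_simps)
  also have "\<dots> = (\<Sum>k\<le>r. a k / (fact k * real n ^ k))"
  proof (rule sum.cong[OF refl])
    fix k assume "k \<in> {..r}"
    then have "real n ^ r = real n ^ k * real n ^ (r - k)" and "real (r choose k) = fact r / (fact k * fact (r - k))"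
      by (simp_all flip: power_add add: binomial_fact)
    then show "a k * (real (r choose k) * real n ^ (r - k) * fact (r - k) / (real n ^ r * fact r))
        = a k / (fact k * real n ^ k)"
      using assms by simp
  qed
  finally show ?thesis
    by (simp add: a_def)
qed

lemma omega_eq_truncated_exp:
  assumes "n \<ge> 1" "j \<le> r"
  shows "omega n r j = (\<Sum>l\<le>r - j. (-1 / real n) ^ l / fact l) / (fact j * real n ^ j)"
proof -
  have "omega n r j = (\<Sum>k\<le>r. (-1) ^ (k - j) * real (k choose j) / (fact k * real n ^ k))"
    using assms(1) by (rule omega_eq_sum)
  also have "\<dots> = (\<Sum>l\<le>r - j. (-1) ^ (l + j - j) * real ((l + j) choose j) / (fact (l + j) * real n ^ (l + j)))"
    using assms(2)
    by (rule sum_atMost_shift_vanishing[where f = "\<lambda>k. (-1) ^ (k - j) * real (k choose j) / (fact k * real n ^ k)",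
        rotated]) (simp add: binomial_eq_0)
  also have "\<dots> = (\<Sum>l\<le>r - j. (-1 / real n) ^ l / fact l / (fact j * real n ^ j))"
  proof (rule sum.cong[OF refl])
    fix l
    have "real ((l + j) choose j) = fact (l + j) / (fact j * fact l)"
      using binomial_fact[of j "l + j"] by simp
    moreover have "(-1 / real n) ^ l = (-1) ^ l / real n ^ l"
      by (rule power_divide)
    ultimately show "(-1) ^ (l + j - j) * real ((l + j) choose j) / (fact (l + j) * real n ^ (l + j))
        = (-1 / real n) ^ l / fact l / (fact j * real n ^ j)"
      using assms(1) by (simp add: power_add)
  qed
  finally show ?thesis
    by (simp add: sum_divide_distrib)
qed

lemma omega_eq_0:
  assumes "n \<ge> 1" "r < j"
  shows "omega n r j = 0"
  using assms by (simp add: omega_eq_sum binomial_eq_0)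

lemma exp_Taylor_remainder_nonpos:
  fixes x :: real
  assumes "x \<le> 0"
  shows "\<bar>exp x - (\<Sum>l\<le>m. x ^ l / fact l)\<bar> \<le> \<bar>x\<bar> ^ Suc m / fact (Suc m)"
proof (cases "x = 0")
  case False
  with assms obtain t where "x < t" "t < 0"
    and taylor: "exp x = (\<Sum>l<Suc m. exp 0 / fact l * x ^ l) + exp t / fact (Suc m) * x ^ Suc m"
    using Maclaurin_minus[of x "Suc m" "\<lambda>_. exp" exp] by auto
  then have "exp t \<le> 1"
    by simp
  then have "\<bar>exp t / fact (Suc m) * x ^ Suc m\<bar> \<le> \<bar>x\<bar> ^ Suc m / fact (Suc m)"
    by (simp add: abs_mult power_abs divide_right_mono mult_left_le_one_le)
  with taylor show ?thesis
    by (simp add: lessThan_Suc_atMost)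
qed (simp add: power_0_left sum.delta' if_distrib[of "\<lambda>v. v / _"] cong: if_cong)

theorem mainTheorem4:
  fixes n r j :: nat
  assumes "n \<ge> 1" and "r \<ge> 1"
  shows "(j \<le> r \<longrightarrow>
           \<bar>omega n r j - exp (- 1 / real n) / (fact j * real n ^ j)\<bar>
             < (1 + 2 ^ (r - j)) / (fact j * real n ^ j * fact (r - j)))
       \<and> (j > r \<longrightarrow> omega n r j = 0)"
proof (intro conjI impI)
  assume "j > r"
  then show "omega n r j = 0"
    using omega_eq_0 assms(1) by simp
next
  assume "j \<le> r"
  define m where "m = r - j"
  define D where "D = fact j * real n ^ j"
  define x where "x = -1 / real n"
  have "\<bar>exp x - (\<Sum>l\<le>m. x ^ l / fact l)\<bar> \<le> \<bar>x\<bar> ^ Suc m / fact (Suc m)"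
    by (rule exp_Taylor_remainder_nonpos) (simp add: x_def)
  also have "\<dots> \<le> 1 / fact (Suc m)"
    using assms(1) by (intro divide_right_mono power_le_one) (auto simp: x_def)
  also have "\<dots> \<le> 1 / fact m"
    by (intro divide_left_mono fact_mono) auto
  also have "\<dots> < (1 + 2 ^ m) / fact m"
    by (simp add: divide_strict_right_mono)
  finally have remainder: "\<bar>exp x - (\<Sum>l\<le>m. x ^ l / fact l)\<bar> < (1 + 2 ^ m) / fact m" .
  have "\<bar>omega n r j - exp x / D\<bar> = \<bar>exp x - (\<Sum>l\<le>m. x ^ l / fact l)\<bar> / D"
    using \<open>j \<le> r\<close> assms(1)
    by (simp add: omega_eq_truncated_exp D_def m_def x_def abs_minus_commute abs_divide abs_mult
        diff_divide_distrib[symmetric])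
  also have "\<dots> < (1 + 2 ^ m) / fact m / D"
    using remainder assms(1) by (intro divide_strict_right_mono) (auto simp: D_def)
  finally show "\<bar>omega n r j - exp (- 1 / real n) / (fact j * real n ^ j)\<bar>
      < (1 + 2 ^ (r - j)) / (fact j * real n ^ j * fact (r - j))"
    by (simp add: D_def m_def x_def mult.commute)
qed

end
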